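(* Let $X$ be a Polish space, $n\ge1$, $\mu\in\mathcal M_f(X)$ with $\mu(X)=n$, and let ${\mathbf T}$ be a thinning kernel of type 1 with normalization $Z$. Then for every non-negative measurable function $\phi$ on $\mathcal M_f(X)$, $${\mathbf T}_\mu\big(\phi\,1_{\{\zeta_X=n-1\}}\big)=\int\frac{Z_\mu}{Z_{\mu-\delta_x}}\,{\mathbf T}_{\mu-\delta_x}\big(\phi\,1_{\{\zeta_X=n-1\}}\big)\,\mu(\mathrm dx).$$
   Context: $\mathcal M_f(X)$ denotes the set of finite counting measures on $X$. For $\mu\in\mathcal M_f(X)$ with an atom at $x$, $\mu-\delta_x$ is $\mu$ with one atom at $x$ removed. $\zeta_X(\eta)=\eta(X)$ is the total number of points. $\mu^{-[n]}$ is the $n$-th falling factorial measure of $\mu$, defined by $\int g\,\mathrm d\mu^{-[n]}=\int\cdots\int g(x_1,\dots,x_n)(\mu-\delta_{x_1}-\dots-\delta_{x_{n-1}})(\mathrm dx_n)\cdots\mu(\mathrm dx_1)$. Write $\delta_{\mathbf x}=\delta_{x_1}+\dots+\delta_{x_n}$. A thinning kernel of type 1 is a stochastic kernel of the form ${\mathbf T}_\mu(\phi)=Z_\mu\sum_{m\ge0}\frac1{m!}\int\phi(\delta_{\mathbf x})\,t({\mathbf x})\,\mu^{-[m]}(\mathrm d{\mathbf x})$. Here $t\ge0$ is a symmetric measurable function on $\bigcup_mX^m$ (for $m=0$ a non-negative number) not depending on $\mu$, and $Z_\mu^{-1}=\sum_m\frac1{m!}\int t\,\mathrm d\mu^{-[m]}\in(0,\infty)$.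 *)

theory Defs
  imports "HOL-Analysis.Analysis" "HOL-Library.Multiset"
begin

text \<open>Finite counting measures on X are represented as multisets over X.
  Integration against a finite counting measure mu is the sum over its atoms
  (with multiplicity).  ffint mu m g is the integral of g against the m-th
  falling factorial measure of mu, following the iterated-integral definition:
  outer integral over x1 against mu, next over x2 against mu - delta x1, etc.\<close>

primrec ffint :: "nat \<Rightarrow> 'a multiset \<Rightarrow> ('a list \<Rightarrow> 'b::comm_monoid_add) \<Rightarrow> 'b" where
  "ffint 0 \<mu> g = g []"
| "ffint (Suc m) \<mu> g = sum_mset (image_mset (\<lambda>x. ffint m (\<mu> - {#x#}) (\<lambda>xs. g (x # xs))) \<mu>)"

definition zeta :: "'a multiset \<Rightarrow> nat" where
  "zeta \<eta> = size \<eta>"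

definition Zinv :: "('a list \<Rightarrow> real) \<Rightarrow> 'a multiset \<Rightarrow> ennreal" where
  "Zinv t \<mu> = (\<Sum>m. ffint m \<mu> (\<lambda>xs. ennreal (t xs)) / of_nat (fact m))"

definition Znorm :: "('a list \<Rightarrow> real) \<Rightarrow> 'a multiset \<Rightarrow> ennreal" where
  "Znorm t \<mu> = inverse (Zinv t \<mu>)"

definition thinT :: "('a list \<Rightarrow> real) \<Rightarrow> 'a multiset \<Rightarrow> ('a multiset \<Rightarrow> ennreal) \<Rightarrow> ennreal" where
  "thinT t \<mu> \<phi> = Znorm t \<mu> *
     (\<Sum>m. ffint m \<mu> (\<lambda>xs. \<phi> (mset xs) * ennreal (t xs)) / of_nat (fact m))"

definition thinning_weight :: "('a list \<Rightarrow> real) \<Rightarrow> bool" where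
  "thinning_weight t \<longleftrightarrow>
     (\<forall>xs. 0 \<le> t xs) \<and>
     (\<forall>xs ys. mset xs = mset ys \<longrightarrow> t xs = t ys) \<and>
     (\<forall>\<mu>. 0 < Zinv t \<mu> \<and> Zinv t \<mu> < \<infinity>)"

end

theory Submission
  imports Defs
begin

text \<open>Only the term m = n - 1 of the series defining the kernel survives the indicator, so both
  sides are multiples of integrals against falling factorial measures of order n - 1.  For
  a counting measure with n points, summing the (n - 1)-st falling factorial measures of all
  the \<mu> - \<delta>x recovers that of \<mu> (each ordered (n-1)-tuple of distinct atoms misses exactly
  one atom), and the normalisations Z(\<mu> - \<delta>x) cancel.\<close>

lemma ffint_cong:
  "(\<And>xs. length xs = m \<Longrightarrow> g xs = g' xs) \<Longrightarrow> ffint m \<mu> g = ffint m \<mu> g'"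
proof (induction m arbitrary: \<mu> g g')
  case 0
  then show ?case by simp
next
  case (Suc m)
  show ?case
    by (simp, rule arg_cong[where f = sum_mset], rule image_mset_cong, rule Suc.IH)
       (use Suc.prems in auto)
qed

lemma ffint_zero: "ffint m \<mu> (\<lambda>xs. 0) = 0"
  by (induction m arbitrary: \<mu>) auto

lemma sum_mset_remove_swap:
  fixes F :: "'a \<Rightarrow> 'a \<Rightarrow> 'b::comm_monoid_add"
  shows "(\<Sum>x\<in>#\<mu>. \<Sum>y\<in>#\<mu> - {#x#}. F x y) = (\<Sum>x\<in>#\<mu>. \<Sum>y\<in>#\<mu> - {#x#}. F y x)"
proof (induction \<mu>)
  case empty
  then show ?case by simp
next
  case (add a \<mu>)
  have "(\<Sum>x\<in>#\<mu>. \<Sum>y\<in>#add_mset a \<mu> - {#x#}. G x y)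
      = (\<Sum>x\<in>#\<mu>. G x a + (\<Sum>y\<in>#\<mu> - {#x#}. G x y))" for G :: "'a \<Rightarrow> 'a \<Rightarrow> 'b"
    by (rule arg_cong[where f = sum_mset], rule image_mset_cong) (simp add: diff_union_swap2)
  then show ?case
    using add.IH by (simp add: sum_mset.distrib add.commute add.left_commute)
qed

lemma sum_mset_ffint_remove:
  fixes g :: "'a list \<Rightarrow> 'b::comm_semiring_1"
  shows "(\<Sum>x\<in>#\<mu>. ffint m (\<mu> - {#x#}) g) = of_nat (size \<mu> - m) * ffint m \<mu> g"
proof (induction m arbitrary: \<mu> g)
  case 0
  then show ?case by simp
next
  case (Suc m)
  have "(\<Sum>x\<in>#\<mu>. ffint (Suc m) (\<mu> - {#x#}) g)
      = (\<Sum>x\<in>#\<mu>. \<Sum>y\<in>#\<mu> - {#x#}. ffint m (\<mu> - {#x#} - {#y#}) (\<lambda>xs. g (y # xs)))"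
    by simp
  also have "\<dots> = (\<Sum>y\<in>#\<mu>. \<Sum>x\<in>#\<mu> - {#y#}. ffint m (\<mu> - {#y#} - {#x#}) (\<lambda>xs. g (y # xs)))"
    using sum_mset_remove_swap[of "\<lambda>x y. ffint m (\<mu> - {#x#} - {#y#}) (\<lambda>xs. g (y # xs))" \<mu>]
    by (simp add: add_mset_commute)
  also have "\<dots> = (\<Sum>y\<in>#\<mu>. of_nat (size \<mu> - Suc m) * ffint m (\<mu> - {#y#}) (\<lambda>xs. g (y # xs)))"
  proof (rule arg_cong[where f = sum_mset], rule image_mset_cong)
    fix y
    assume "y \<in># \<mu>"
    then show "(\<Sum>x\<in>#\<mu> - {#y#}. ffint m (\<mu> - {#y#} - {#x#}) (\<lambda>xs. g (y # xs)))
        = of_nat (size \<mu> - Suc m) * ffint m (\<mu> - {#y#}) (\<lambda>xs. g (y # xs))"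
      using Suc.IH[of "\<mu> - {#y#}"] by (simp add: size_Diff_singleton)
  qed
  also have "\<dots> = of_nat (size \<mu> - Suc m) * ffint (Suc m) \<mu> g"
    by (simp add: sum_mset_distrib_left)
  finally show ?case .
qed

lemma thinT_restrict_size:
  "thinT t \<nu> (\<lambda>\<eta>. \<phi> \<eta> * indicator {\<eta>. zeta \<eta> = k} \<eta>)
     = Znorm t \<nu> * (ffint k \<nu> (\<lambda>xs. \<phi> (mset xs) * ennreal (t xs)) / of_nat (fact k))"
proof -
  define g where "g = (\<lambda>xs. \<phi> (mset xs) * ennreal (t xs))"
  define f where "f = (\<lambda>m. ffint m \<nu> g / of_nat (fact m) :: ennreal)"
  have "ffint m \<nu> (\<lambda>xs. \<phi> (mset xs) * indicator {\<eta>. zeta \<eta> = k} (mset xs) * ennreal (t xs))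
      = (if m = k then ffint m \<nu> g else ffint m \<nu> (\<lambda>xs. 0))" for m
    by (auto intro: ffint_cong simp: g_def zeta_def)
  then have "(\<lambda>m. ffint m \<nu> (\<lambda>xs. \<phi> (mset xs) * indicator {\<eta>. zeta \<eta> = k} (mset xs)
        * ennreal (t xs)) / of_nat (fact m)) = (\<lambda>m. if m = k then f m else 0)"
    by (auto simp: f_def ffint_zero)
  moreover have "(\<lambda>m. if m = k then f m else 0) sums f k"
    by (rule sums_single)
  ultimately show ?thesis
    unfolding thinT_def by (simp add: sums_iff f_def g_def)
qed

lemma Znorm_cancel:
  assumes "thinning_weight t"
  shows "a / Znorm t \<nu> * (Znorm t \<nu> * s) = a * s"
proof -
  have "0 < Zinv t \<nu>" "Zinv t \<nu> < \<infinity>"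
    using assms unfolding thinning_weight_def by blast+
  then have "Znorm t \<nu> \<noteq> 0" "Znorm t \<nu> \<noteq> top"
    unfolding Znorm_def by (simp_all add: infinity_ennreal_def)
  then have "Znorm t \<nu> * s / Znorm t \<nu> = s"
    by (metis mult.commute mult_divide_eq_ennreal)
  then show ?thesis
    by (simp only: ennreal_divide_times)
qed

theorem mainTheorem6:
  fixes t :: "'a::polish_space list \<Rightarrow> real"
    and \<mu> :: "'a multiset"
    and n :: nat
    and \<phi> :: "'a multiset \<Rightarrow> ennreal"
  assumes "n \<ge> 1"
    and "size \<mu> = n"
    and "thinning_weight t"
  shows "thinT t \<mu> (\<lambda>\<eta>. \<phi> \<eta> * indicator {\<eta>. zeta \<eta> = n - 1} \<eta>)
       = sum_mset (image_mset (\<lambda>x. Znorm t \<mu> / Znorm t (\<mu> - {#x#})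
            * thinT t (\<mu> - {#x#}) (\<lambda>\<eta>. \<phi> \<eta> * indicator {\<eta>. zeta \<eta> = n - 1} \<eta>)) \<mu>)"
proof -
  define g where "g = (\<lambda>xs. \<phi> (mset xs) * ennreal (t xs))"
  define c :: ennreal where "c = of_nat (fact (n - 1))"
  have "size \<mu> - (n - 1) = 1"
    using assms(1,2) by simp
  then have "ffint (n - 1) \<mu> g = (\<Sum>x\<in>#\<mu>. ffint (n - 1) (\<mu> - {#x#}) g)"
    by (simp add: sum_mset_ffint_remove)
  then have "Znorm t \<mu> * (ffint (n - 1) \<mu> g / c)
      = (\<Sum>x\<in>#\<mu>. Znorm t \<mu> * (ffint (n - 1) (\<mu> - {#x#}) g / c))"
    by (simp only: divide_ennreal_def sum_mset_distrib_left sum_mset_distrib_right)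
  then show ?thesis
    unfolding thinT_restrict_size Znorm_cancel[OF assms(3)] g_def[symmetric] c_def[symmetric] .
qed

end
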